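(* Multi-winner approval voting (AV) is the only Thiele rule (for the fixed $m$ and $k$) that satisfies the excellence criterion.
   Context: Let $\mathcal C=\{c_1,\dots,c_m\}$ ($m\ge2$) be the candidates, $\mathcal A$ the set of non-empty subsets of $\mathcal C$ (ballots), and a profile a map $A:N_A\to\mathcal A$ from a non-empty finite set of voters $N_A\subseteq\mathbb N$. Fix $k\in\{1,\dots,m-1\}$, and let $\mathcal W_k$ be the set of $k$-element subsets of $\mathcal C$ (committees). An ABC voting rule maps each profile to a non-empty subset of $\mathcal W_k$. A Thiele rule is an ABC voting rule for which there is a non-decreasing $s:\{0,\dots,k\}\to\mathbb R$ with $s(0)=0$ such that $f(A)$ is the set of committees $W$ maximizing $\sum_{i\in N_A}s(|A_i\cap W|)$. AV is the Thiele rule with $s(x)=x$. A profile $A$ is a party-list profile if there is a partition $\mathcal P_A=\{P_1,\dots,P_\ell\}$ of $\mathcal C$ such that every voter's ballot equals some $P_j$; $n_j$ denotes the number of voters whose ballot is $P_j$. An ABC voting rule $f$ satisfies the excellence criterion if for all party-list profiles $A$, all $W\in f(A)$, and all parties $P_i,P_j\in\mathcal P_A$ with $n_i<n_j$, $P_i\subseteq W$ implies $P_j\subseteq W$. *)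

theory Defs
  imports Complex_Main "HOL-Library.Disjoint_Sets"
begin

text \<open>Non-participating voters are encoded by the empty set.\<close>

definition voters :: "(nat \<Rightarrow> 'a set) \<Rightarrow> nat set" where
  "voters A = {i. A i \<noteq> {}}"

definition is_profile :: "'a set \<Rightarrow> (nat \<Rightarrow> 'a set) \<Rightarrow> bool" where
  "is_profile C A \<longleftrightarrow> finite (voters A) \<and> voters A \<noteq> {} \<and> (\<forall>i. A i \<subseteq> C)"

definition committees :: "'a set \<Rightarrow> nat \<Rightarrow> 'a set set" where
  "committees C k = {W. W \<subseteq> C \<and> card W = k}"

definition is_abc_rule :: "'a set \<Rightarrow> nat \<Rightarrow> ((nat \<Rightarrow> 'a set) \<Rightarrow> 'a set set) \<Rightarrow> bool" where
  "is_abc_rule C k f \<longleftrightarrow>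
     (\<forall>A. is_profile C A \<longrightarrow> f A \<noteq> {} \<and> f A \<subseteq> committees C k)"

definition thiele_score :: "(nat \<Rightarrow> real) \<Rightarrow> (nat \<Rightarrow> 'a set) \<Rightarrow> 'a set \<Rightarrow> real" where
  "thiele_score s A W = (\<Sum>i\<in>voters A. s (card (A i \<inter> W)))"

definition thiele_outcome :: "'a set \<Rightarrow> nat \<Rightarrow> (nat \<Rightarrow> real) \<Rightarrow> (nat \<Rightarrow> 'a set) \<Rightarrow> 'a set set" where
  "thiele_outcome C k s A =
     {W \<in> committees C k. \<forall>W' \<in> committees C k. thiele_score s A W' \<le> thiele_score s A W}"

text \<open>Admissible Thiele scoring functions: s 0 = 0, non-decreasing on {0..k}
  (values above k are irrelevant since |A_i \<inter> W| \<le> k).\<close>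
definition thiele_rule :: "'a set \<Rightarrow> nat \<Rightarrow> ((nat \<Rightarrow> 'a set) \<Rightarrow> 'a set set) \<Rightarrow> bool" where
  "thiele_rule C k f \<longleftrightarrow> is_abc_rule C k f \<and>
     (\<exists>s :: nat \<Rightarrow> real. s 0 = 0 \<and> (\<forall>x y. x \<le> y \<longrightarrow> y \<le> k \<longrightarrow> s x \<le> s y) \<and>
        (\<forall>A. is_profile C A \<longrightarrow> f A = thiele_outcome C k s A))"

definition AV :: "'a set \<Rightarrow> nat \<Rightarrow> (nat \<Rightarrow> 'a set) \<Rightarrow> 'a set set" where
  "AV C k = thiele_outcome C k real"

definition party_list_with :: "'a set \<Rightarrow> (nat \<Rightarrow> 'a set) \<Rightarrow> 'a set set \<Rightarrow> bool" where
  "party_list_with C A P \<longleftrightarrow> is_profile C A \<and> partition_on C P \<and> (\<forall>i\<in>voters A. A i \<in> P)"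

definition party_support :: "(nat \<Rightarrow> 'a set) \<Rightarrow> 'a set \<Rightarrow> nat" where
  "party_support A Pj = card {i \<in> voters A. A i = Pj}"

definition excellence :: "'a set \<Rightarrow> ((nat \<Rightarrow> 'a set) \<Rightarrow> 'a set set) \<Rightarrow> bool" where
  "excellence C f \<longleftrightarrow>
     (\<forall>A P. party_list_with C A P \<longrightarrow>
        (\<forall>W \<in> f A. \<forall>Pi\<in>P. \<forall>Pj\<in>P.
           party_support A Pi < party_support A Pj \<longrightarrow> Pi \<subseteq> W \<longrightarrow> Pj \<subseteq> W))"

end

theory Submission
  imports Defs
begin

text \<open>In a party-list profile the AV score of a committee is the sum, over its members, of
  the supports of their parties; replacing a member of a weaker party by a missing member
  of a stronger one therefore increases it, so AV is excellent.

  Conversely, let a Thiele rule with scoring function s be excellent and 1 \<le> j \<le> k.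
  Take a party X of j candidates supported by a voters and k + 1 - j singleton parties
  supported by b voters each. Leaving out a member of X instead of a singleton changes the
  score by b s(1) - a (s(j) - s(j-1)). Excellence forces an optimal committee to omit a
  singleton rather than a member of X when a > b, and vice versa when a < b; hence
  a (s(j) - s(j-1)) \<ge> b s(1) when a > b, and \<le> when a < b. Letting a/b tend to 1 gives
  s(j) - s(j-1) = s(1), so s is linear, and s(1) > 0 since the zero function is not
  excellent. A positive multiple of AV selects the same committees.\<close>

lemma finite_committees: "finite C \<Longrightarrow> finite (committees C k)"
  unfolding committees_def by (rule finite_subset[of _ "Pow C"]) auto

lemma card_inter_committee_le:
  assumes "finite C" "W \<in> committees C k"
  shows "card (B \<inter> W) \<le> k"
proof -
  have "finite W" using assms finite_subset by (auto simp: committees_def)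
  hence "card (B \<inter> W) \<le> card W" by (intro card_mono) auto
  thus ?thesis using assms(2) by (simp add: committees_def)
qed

lemma card_inter_disjoint_committee_le:
  assumes "finite C" "W \<in> committees C k" "finite X" "finite S" "X \<inter> S = {}"
  shows "card (X \<inter> W) + card (S \<inter> W) \<le> k"
proof -
  have "card (X \<inter> W) + card (S \<inter> W) = card ((X \<union> S) \<inter> W)"
    using assms(3-5) by (subst card_Un_disjoint[symmetric]) (auto simp: Int_Un_distrib2)
  thus ?thesis using card_inter_committee_le[OF assms(1,2)] by simp
qed

lemma committee_remove:
  assumes "B \<subseteq> C" "finite B" "card B = Suc k" "x \<in> B"
  shows "B - {x} \<in> committees C k"
  using assms by (auto simp: committees_def)

lemma committee_swap:
  assumes "W \<in> committees C k" "finite W" "c \<in> C" "c \<notin> W" "c' \<in> W"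
  shows "insert c (W - {c'}) \<in> committees C k"
proof -
  have "card W \<noteq> 0" using assms(2,5) by auto
  with assms show ?thesis by (auto simp: committees_def)
qed

lemma thiele_outcome_nonempty:
  assumes "finite C" "k \<le> card C"
  shows "thiele_outcome C k s A \<noteq> {}"
proof -
  obtain W0 where "W0 \<subseteq> C" "card W0 = k"
    using obtain_subset_with_card_n[OF assms(2)] by metis
  hence ne: "committees C k \<noteq> {}" by (auto simp: committees_def)
  have "Max (thiele_score s A ` committees C k) \<in> thiele_score s A ` committees C k"
    using finite_committees[OF assms(1)] ne by (intro Max_in) auto
  then obtain W where "W \<in> committees C k"
    "thiele_score s A W = Max (thiele_score s A ` committees C k)" by auto
  hence "W \<in> thiele_outcome C k s A"
    using finite_committees[OF assms(1)] by (auto simp: thiele_outcome_def)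
  thus ?thesis by auto
qed

lemma thiele_score_by_parties:
  assumes "finite (voters A)" "finite Ps" "\<forall>i\<in>voters A. A i \<in> Ps"
  shows "thiele_score s A W = (\<Sum>P\<in>Ps. real (party_support A P) * s (card (P \<inter> W)))"
proof -
  have "thiele_score s A W = (\<Sum>P\<in>Ps. \<Sum>i\<in>{i\<in>voters A. A i = P}. s (card (A i \<inter> W)))"
    unfolding thiele_score_def using assms by (intro sum.group[symmetric]) auto
  also have "\<dots> = (\<Sum>P\<in>Ps. \<Sum>i\<in>{i\<in>voters A. A i = P}. s (card (P \<inter> W)))"
    by (intro sum.cong) auto
  finally show ?thesis by (simp add: party_support_def)
qed

lemma thiele_score_real_eq_sum_approvals:
  assumes "finite (voters A)" "finite W"
  shows "thiele_score real A W = (\<Sum>c\<in>W. real (card {i \<in> voters A. c \<in> A i}))"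
proof -
  have "thiele_score real A W = (\<Sum>i\<in>voters A. \<Sum>c\<in>W. if c \<in> A i then 1 else 0)"
    unfolding thiele_score_def using assms(2)
    by (intro sum.cong refl) (simp add: sum.If_cases Int_commute)
  also have "\<dots> = (\<Sum>c\<in>W. \<Sum>i\<in>voters A. if c \<in> A i then 1 else 0)"
    by (rule sum.swap)
  finally show ?thesis using assms(1) by (simp add: sum.If_cases Collect_conj_eq)
qed

lemma approvers_in_party_list:
  assumes "party_list_with C A Ps" "P \<in> Ps" "c \<in> P"
  shows "{i \<in> voters A. c \<in> A i} = {i \<in> voters A. A i = P}"
  using assms by (auto simp: party_list_with_def partition_on_def disjoint_def)

lemma AV_excellence:
  assumes "finite C"
  shows "excellence C (AV C k)"
  unfolding excellence_def
proof (intro allI impI ballI)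
  fix A Ps W Pi Pj
  assume pl: "party_list_with C A Ps" and W: "W \<in> AV C k A" and "Pi \<in> Ps" "Pj \<in> Ps"
    and less: "party_support A Pi < party_support A Pj" and "Pi \<subseteq> W"
  show "Pj \<subseteq> W"
  proof (rule ccontr)
    assume "\<not> Pj \<subseteq> W"
    then obtain c where c: "c \<in> Pj" "c \<notin> W" by auto
    have "Pi \<noteq> {}" using pl \<open>Pi \<in> Ps\<close> by (auto simp: party_list_with_def partition_on_def)
    then obtain c' where c': "c' \<in> Pi" by auto
    have "c' \<in> W" using c' \<open>Pi \<subseteq> W\<close> by auto
    have Wc: "W \<in> committees C k"
      and opt: "\<forall>W'\<in>committees C k. thiele_score real A W' \<le> thiele_score real A W"
      using W by (auto simp: AV_def thiele_outcome_def)
    have "finite W" using Wc assms finite_subset by (auto simp: committees_def)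
    have "finite (voters A)" using pl by (simp add: party_list_with_def is_profile_def)
    have "c \<in> C" using c \<open>Pj \<in> Ps\<close> pl by (auto simp: party_list_with_def partition_on_def)
    let ?W' = "insert c (W - {c'})"
    let ?appr = "\<lambda>x. real (card {i \<in> voters A. x \<in> A i})"
    have "thiele_score real A ?W' = ?appr c + (\<Sum>x\<in>W. ?appr x) - ?appr c'"
      using \<open>finite W\<close> \<open>finite (voters A)\<close> c \<open>c' \<in> W\<close>
      by (simp add: thiele_score_real_eq_sum_approvals sum_diff1)
    also have "\<dots> = thiele_score real A W + party_support A Pj - party_support A Pi"
      using \<open>finite W\<close> \<open>finite (voters A)\<close>
        approvers_in_party_list[OF pl \<open>Pj \<in> Ps\<close> c(1)] approvers_in_party_list[OF pl \<open>Pi \<in> Ps\<close> c']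
      by (simp add: thiele_score_real_eq_sum_approvals party_support_def)
    finally have "thiele_score real A W < thiele_score real A ?W'" using less by simp
    moreover have "?W' \<in> committees C k"
      using committee_swap[OF Wc \<open>finite W\<close> \<open>c \<in> C\<close> c(2) \<open>c' \<in> W\<close>] .
    ultimately show False using opt by force
  qed
qed

lemma thiele_outcome_linear_eq_AV:
  assumes "finite C" "0 < t" "\<And>i. i \<le> k \<Longrightarrow> s i = t * real i"
  shows "thiele_outcome C k s A = AV C k A"
proof -
  have "thiele_score s A W = t * thiele_score real A W" if "W \<in> committees C k" for W
    using card_inter_committee_le[OF assms(1) that] assms(3)
    by (simp add: thiele_score_def sum_distrib_left)
  thus ?thesis using assms(2) by (auto simp: AV_def thiele_outcome_def)
qed

lemma AV_thiele_rule:
  assumes "finite C" "k \<le> card C"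
  shows "thiele_rule C k (AV C k)"
  unfolding thiele_rule_def is_abc_rule_def
proof (intro conjI allI impI)
  show "AV C k A \<noteq> {}" for A
    unfolding AV_def using thiele_outcome_nonempty[OF assms] .
  show "AV C k A \<subseteq> committees C k" for A
    unfolding AV_def thiele_outcome_def by auto
  show "\<exists>s. s 0 = 0 \<and> (\<forall>x y. x \<le> y \<longrightarrow> y \<le> k \<longrightarrow> s x \<le> s y) \<and>
      (\<forall>A. is_profile C A \<longrightarrow> AV C k A = thiele_outcome C k s A)"
    by (rule exI[of _ real]) (simp add: AV_def)
qed

lemma excellence_cong:
  assumes "\<And>A. is_profile C A \<Longrightarrow> f A = g A" "excellence C f"
  shows "excellence C g"
  using assms by (simp add: excellence_def party_list_with_def)

lemma nonpos_if_multiples_bounded: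
  fixes x y :: "'a::archimedean_field"
  assumes "\<And>n. 0 < n \<Longrightarrow> of_nat n * x \<le> y"
  shows "x \<le> 0"
proof (rule ccontr)
  assume "\<not> x \<le> 0"
  then obtain n where "y < of_nat n * x" using ex_less_of_nat_mult[of x y] by auto
  also have "\<dots> \<le> of_nat (Suc n) * x" using \<open>\<not> x \<le> 0\<close> by (simp add: algebra_simps)
  finally show False using assms[of "Suc n"] by simp
qed

lemma exists_profile_with_supports:
  assumes "finite Ps" "{} \<notin> Ps"
  shows "\<exists>A. finite (voters A) \<and> (\<forall>i\<in>voters A. A i \<in> Ps) \<and>
    (\<forall>P\<in>Ps. party_support A P = g P)"
  using assms
proof (induction Ps rule: finite_induct)
  case empty
  show ?case by (rule exI[of _ "\<lambda>_. {}"]) (simp add: voters_def)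
next
  case (insert P Ps)
  then obtain A where A: "finite (voters A)" "\<forall>i\<in>voters A. A i \<in> Ps"
    "\<forall>Q\<in>Ps. party_support A Q = g Q"
    by auto
  obtain N where N: "\<forall>i\<in>voters A. i < N"
    using A(1) finite_nat_set_iff_bounded by blast
  define A' where "A' = (\<lambda>i. if N \<le> i \<and> i < N + g P then P else A i)"
  have voters_A': "voters A' = voters A \<union> {N..<N + g P}"
    using N insert.prems unfolding voters_def A'_def by auto
  have "{i \<in> voters A'. A' i = P} = {N..<N + g P}"
    using N A(2) insert.hyps(2) unfolding voters_A' by (auto simp: A'_def)
  hence "party_support A' P = g P" by (simp add: party_support_def)
  moreover have "party_support A' Q = g Q" if "Q \<in> Ps" for Q
  proof -
    have "{i \<in> voters A'. A' i = Q} = {i \<in> voters A. A i = Q}"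
      using N that insert.hyps(2) unfolding voters_A' by (auto simp: A'_def)
    thus ?thesis using A(3) that by (simp add: party_support_def)
  qed
  moreover have "\<forall>i\<in>voters A'. A' i \<in> insert P Ps"
    using A(2) N unfolding voters_A' by (auto simp: A'_def)
  moreover have "finite (voters A')" unfolding voters_A' using A(1) by simp
  ultimately show ?case by (intro exI[of _ A']) auto
qed

lemma partition_on_insert_singletons:
  assumes "X \<subseteq> C" "X \<noteq> {}"
  shows "partition_on C (insert X ((\<lambda>c. {c}) ` (C - X)))"
proof -
  have "disjnt X (\<Union>((\<lambda>c. {c}) ` (C - X)))" by (auto simp: disjnt_def)
  thus ?thesis using partition_on_insert partition_on_singletons assms by blast
qed

lemma exists_two_tier_profile:
  assumes "finite C" "X \<subseteq> C" "X \<noteq> {}" "S \<subseteq> C - X" "1 \<le> a"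
  obtains A Ps where "party_list_with C A Ps" "X \<in> Ps" "\<forall>y\<in>S. {y} \<in> Ps"
    "party_support A X = a" "\<forall>y\<in>S. party_support A {y} = b"
    "\<And>s W. s 0 = 0 \<Longrightarrow>
       thiele_score s A W = real a * s (card (X \<inter> W)) + real b * s 1 * real (card (S \<inter> W))"
proof -
  define Ps where "Ps = insert X ((\<lambda>c. {c}) ` (C - X))"
  define g where "g P = (if P = X then a else if P \<in> (\<lambda>c. {c}) ` S then b else 0)" for P
  have "finite Ps" using assms(1) by (simp add: Ps_def)
  moreover have "{} \<notin> Ps" using assms(3) by (auto simp: Ps_def)
  ultimately obtain A where A: "finite (voters A)" "\<forall>i\<in>voters A. A i \<in> Ps"
    "\<forall>P\<in>Ps. party_support A P = g P"
    using exists_profile_with_supports by blast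
  have support_X: "party_support A X = a" using A(3) by (simp add: Ps_def g_def)
  have support_single: "party_support A {c} = (if c \<in> S then b else 0)" if "c \<in> C - X" for c
    using A(3) that assms(4) by (auto simp: Ps_def g_def)
  have "voters A \<noteq> {}"
    using support_X assms(5) by (auto simp: party_support_def)
  moreover have "A i \<subseteq> C" for i
    using A(2) assms(2) by (cases "i \<in> voters A") (auto simp: Ps_def voters_def)
  ultimately have party_list: "party_list_with C A Ps"
    using A(1,2) partition_on_insert_singletons[OF assms(2,3)]
    by (simp add: party_list_with_def is_profile_def Ps_def)
  have score: "thiele_score s A W =
      real a * s (card (X \<inter> W)) + real b * s 1 * real (card (S \<inter> W))" if "s 0 = 0" for s W
  proof -
    have "X \<notin> (\<lambda>c. {c}) ` (C - X)" by auto
    hence "thiele_score s A W = real a * s (card (X \<inter> W)) +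
        (\<Sum>P\<in>(\<lambda>c. {c}) ` (C - X). real (party_support A P) * s (card (P \<inter> W)))"
      using thiele_score_by_parties[OF A(1) \<open>finite Ps\<close> A(2)] assms(1) support_X
      by (simp add: Ps_def)
    also have "(\<Sum>P\<in>(\<lambda>c. {c}) ` (C - X). real (party_support A P) * s (card (P \<inter> W)))
        = (\<Sum>c\<in>C - X. if c \<in> S \<inter> W then real b * s 1 else 0)"
      using support_single \<open>s 0 = 0\<close> by (subst sum.reindex) (auto intro!: sum.cong)
    also have "\<dots> = real b * s 1 * real (card (S \<inter> W))"
    proof -
      have "(C - X) \<inter> {c \<in> S. c \<in> W} = S \<inter> W" using assms(4) by auto
      thus ?thesis using assms(1) by (simp add: sum.If_cases)
    qed
    finally show ?thesis .
  qed
  show ?thesis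
    by (rule that[OF party_list _ _ support_X _ score])
      (use assms(4) support_single in \<open>auto simp: Ps_def\<close>)
qed

locale excellent_thiele_scoring =
  fixes C :: "'a set" and k :: nat and s :: "nat \<Rightarrow> real"
  assumes finite_C: "finite C" and k_pos: "1 \<le> k" and k_less: "k < card C"
    and s_zero: "s 0 = 0" and s_mono: "\<And>x y. x \<le> y \<Longrightarrow> y \<le> k \<Longrightarrow> s x \<le> s y"
    and excellent: "excellence C (thiele_outcome C k s)"
begin

lemma excellentD:
  "party_list_with C A Ps \<Longrightarrow> W \<in> thiele_outcome C k s A \<Longrightarrow> P \<in> Ps \<Longrightarrow> Q \<in> Ps \<Longrightarrow>
    party_support A P < party_support A Q \<Longrightarrow> P \<subseteq> W \<Longrightarrow> Q \<subseteq> W"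
  using excellent unfolding excellence_def by blast

lemma obtain_winner:
  obtains W where "W \<in> committees C k" "\<And>W'. W' \<in> committees C k \<Longrightarrow>
    thiele_score s A W' \<le> thiele_score s A W" "W \<in> thiele_outcome C k s A"
  using thiele_outcome_nonempty[OF finite_C, of k s A] k_less
  unfolding thiele_outcome_def by fastforce

lemma obtain_two_tier_profile:
  assumes "1 \<le> j" "j \<le> k" "1 \<le> a"
  obtains X S A Ps where "X \<subseteq> C" "S \<subseteq> C - X" "card X = j" "card S = Suc k - j"
    "finite X" "finite S" "card (X \<union> S) = Suc k"
    "party_list_with C A Ps" "X \<in> Ps" "\<forall>y\<in>S. {y} \<in> Ps"
    "party_support A X = a" "\<forall>y\<in>S. party_support A {y} = b"
    "\<And>W. thiele_score s A W = real a * s (card (X \<inter> W)) + real b * s 1 * real (card (S \<inter> W))"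
proof -
  obtain T where T: "T \<subseteq> C" "card T = Suc k"
    using obtain_subset_with_card_n[of "Suc k" C] k_less by auto
  obtain X where X: "X \<subseteq> T" "card X = j"
    using obtain_subset_with_card_n[of j T] assms T by auto
  have "finite T" using T finite_C finite_subset by blast
  hence "finite X" "card (T - X) = Suc k - j" using X T by (auto simp: card_Diff_subset finite_subset)
  moreover have "X \<union> (T - X) = T" using X by auto
  moreover have "X \<subseteq> C" "T - X \<subseteq> C - X" "X \<noteq> {}" using X T assms by auto
  moreover obtain A Ps where "party_list_with C A Ps" "X \<in> Ps" "\<forall>y\<in>T - X. {y} \<in> Ps"
    "party_support A X = a" "\<forall>y\<in>T - X. party_support A {y} = b"
    "\<And>s W. s 0 = 0 \<Longrightarrow> thiele_score s A W =
       real a * s (card (X \<inter> W)) + real b * s 1 * real (card ((T - X) \<inter> W))"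
    using exists_two_tier_profile[OF finite_C \<open>X \<subseteq> C\<close> \<open>X \<noteq> {}\<close> \<open>T - X \<subseteq> C - X\<close> assms(3)]
    by blast
  ultimately show ?thesis
    using that[of X "T - X"] X T \<open>finite T\<close> s_zero by auto
qed

lemma increment_lower_bound:
  assumes j: "1 \<le> j" "j \<le> k" and "b < a" "1 \<le> b"
  shows "real b * s 1 \<le> real a * (s j - s (j - 1))"
proof (rule ccontr)
  assume "\<not> ?thesis"
  hence gap: "real a * s j < real a * s (j - 1) + real b * s 1" by (simp add: algebra_simps)
  have "1 \<le> a" using assms by simp
  obtain X S A Ps where XS: "X \<subseteq> C" "S \<subseteq> C - X" "card X = j" "card S = Suc k - j"
      "finite X" "finite S" "card (X \<union> S) = Suc k"
    and A: "party_list_with C A Ps" "X \<in> Ps" "\<forall>y\<in>S. {y} \<in> Ps"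
      "party_support A X = a" "\<forall>y\<in>S. party_support A {y} = b"
    and score: "\<And>W. thiele_score s A W =
      real a * s (card (X \<inter> W)) + real b * s 1 * real (card (S \<inter> W))"
    using obtain_two_tier_profile[OF j \<open>1 \<le> a\<close>, of b] by blast
  have "real a * s (j - 1) \<le> real a * s j" using s_mono[of "j - 1" j] j by (simp add: mult_left_mono)
  hence "0 < real b * s 1" using gap by linarith
  hence "0 < s 1" by (simp add: zero_less_mult_iff)
  obtain x where "x \<in> X" using XS(3) j by fastforce
  define W1 where "W1 = X \<union> S - {x}"
  have "W1 \<in> committees C k" unfolding W1_def using XS \<open>x \<in> X\<close> by (intro committee_remove) auto
  have "X \<inter> W1 = X - {x}" "S \<inter> W1 = S" using XS(2) \<open>x \<in> X\<close> by (auto simp: W1_def)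
  hence score_W1: "thiele_score s A W1 = real a * s (j - 1) + real b * s 1 * real (Suc k - j)"
    using score XS \<open>x \<in> X\<close> by simp
  obtain W where Wc: "W \<in> committees C k" and W1_le: "thiele_score s A W1 \<le> thiele_score s A W"
    and W: "W \<in> thiele_outcome C k s A"
    using obtain_winner \<open>W1 \<in> committees C k\<close> by metis
  have "\<not> X \<subseteq> W"
  proof
    assume "X \<subseteq> W"
    hence "card (X \<inter> W) = j" using XS(3) by (simp add: Int_absorb2)
    moreover have "X \<inter> S = {}" using XS(2) by auto
    hence "card (S \<inter> W) \<le> k - j"
      using card_inter_disjoint_committee_le[OF finite_C Wc XS(5,6)] \<open>card (X \<inter> W) = j\<close>
      by auto
    ultimately have "thiele_score s A W \<le> real a * s j + real b * s 1 * real (k - j)"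
      using score \<open>0 < s 1\<close> \<open>1 \<le> b\<close> by (simp add: mult_left_mono)
    moreover have "real (Suc k - j) = real (k - j) + 1" using j by simp
    ultimately show False using gap score_W1 W1_le by (simp add: algebra_simps)
  qed
  have "S \<inter> W = {}"
  proof (rule ccontr)
    assume "S \<inter> W \<noteq> {}"
    then obtain y where "y \<in> S" "y \<in> W" by auto
    hence "X \<subseteq> W" using excellentD[OF A(1) W, of "{y}" X] A \<open>b < a\<close> by auto
    thus False using \<open>\<not> X \<subseteq> W\<close> by simp
  qed
  have "card (X \<inter> W) < card X"
    using \<open>\<not> X \<subseteq> W\<close> XS(5) by (intro psubset_card_mono) auto
  hence "real a * s (card (X \<inter> W)) \<le> real a * s (j - 1)"
    using s_mono[of "card (X \<inter> W)" "j - 1"] XS(3) j by (simp add: mult_left_mono)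
  moreover have "0 < real b * s 1 * real (Suc k - j)" using \<open>0 < s 1\<close> \<open>1 \<le> b\<close> j by simp
  moreover have "thiele_score s A W = real a * s (card (X \<inter> W))"
    using score[of W] \<open>S \<inter> W = {}\<close> by simp
  ultimately show False using score_W1 W1_le by linarith
qed

lemma increment_upper_bound:
  assumes j: "1 \<le> j" "j \<le> k" and "a < b" "1 \<le> a"
  shows "real a * (s j - s (j - 1)) \<le> real b * s 1"
proof (rule ccontr)
  assume "\<not> ?thesis"
  hence gap: "real a * s (j - 1) + real b * s 1 < real a * s j" by (simp add: algebra_simps)
  obtain X S A Ps where XS: "X \<subseteq> C" "S \<subseteq> C - X" "card X = j" "card S = Suc k - j"
      "finite X" "finite S" "card (X \<union> S) = Suc k"
    and A: "party_list_with C A Ps" "X \<in> Ps" "\<forall>y\<in>S. {y} \<in> Ps"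
      "party_support A X = a" "\<forall>y\<in>S. party_support A {y} = b"
    and score: "\<And>W. thiele_score s A W =
      real a * s (card (X \<inter> W)) + real b * s 1 * real (card (S \<inter> W))"
    using obtain_two_tier_profile[OF j \<open>1 \<le> a\<close>, of b] by blast
  have "0 \<le> s 1" using s_mono[of 0 1] k_pos s_zero by simp
  obtain y where "y \<in> S" using XS(4) j by fastforce
  define W2 where "W2 = X \<union> S - {y}"
  have "W2 \<in> committees C k" unfolding W2_def using XS \<open>y \<in> S\<close> by (intro committee_remove) auto
  have "X \<inter> W2 = X" "S \<inter> W2 = S - {y}" using XS(2) \<open>y \<in> S\<close> by (auto simp: W2_def)
  hence score_W2: "thiele_score s A W2 = real a * s j + real b * s 1 * real (k - j)"
    using score XS \<open>y \<in> S\<close> by simp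
  obtain W where Wc: "W \<in> committees C k" and W2_le: "thiele_score s A W2 \<le> thiele_score s A W"
    and W: "W \<in> thiele_outcome C k s A"
    using obtain_winner \<open>W2 \<in> committees C k\<close> by metis
  have "X \<subseteq> W"
  proof (rule ccontr)
    assume "\<not> X \<subseteq> W"
    hence "card (X \<inter> W) < card X" using XS(5) by (intro psubset_card_mono) auto
    hence "real a * s (card (X \<inter> W)) \<le> real a * s (j - 1)"
      using s_mono[of "card (X \<inter> W)" "j - 1"] XS(3) j by (simp add: mult_left_mono)
    moreover have "card (S \<inter> W) \<le> k - j + 1"
      using card_mono[OF XS(6), of "S \<inter> W"] XS(4) by simp
    hence "real b * s 1 * real (card (S \<inter> W)) \<le> real b * s 1 * (real (k - j) + 1)"
      using \<open>0 \<le> s 1\<close> by (intro mult_left_mono) auto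
    ultimately show False using gap score[of W] score_W2 W2_le by (simp add: algebra_simps)
  qed
  hence "card (X \<inter> W) = j" using XS(3) by (simp add: Int_absorb2)
  moreover have "X \<inter> S = {}" using XS(2) by auto
  ultimately have "card (S \<inter> W) < card S"
    using card_inter_disjoint_committee_le[OF finite_C Wc XS(5,6)] XS(4) j by auto
  then obtain y' where "y' \<in> S" "y' \<notin> W" by (metis Int_absorb2 Int_commute nat_less_le subsetI)
  have "{y'} \<subseteq> W"
    using excellentD[OF A(1) W, of X "{y'}"] A \<open>a < b\<close> \<open>X \<subseteq> W\<close> \<open>y' \<in> S\<close> by auto
  thus False using \<open>y' \<notin> W\<close> by simp
qed

lemma increment_eq:
  assumes "1 \<le> j" "j \<le> k"
  shows "s j - s (j - 1) = s 1"
proof -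
  have "s 1 - (s j - s (j - 1)) \<le> 0"
  proof (rule nonpos_if_multiples_bounded)
    fix n :: nat assume "0 < n"
    thus "real n * (s 1 - (s j - s (j - 1))) \<le> s j - s (j - 1)"
      using increment_lower_bound[OF assms, of n "Suc n"] by (simp add: algebra_simps)
  qed
  moreover have "s j - s (j - 1) - s 1 \<le> 0"
  proof (rule nonpos_if_multiples_bounded)
    fix n :: nat assume "0 < n"
    thus "real n * (s j - s (j - 1) - s 1) \<le> s 1"
      using increment_upper_bound[OF assms, of n "Suc n"] by (simp add: algebra_simps)
  qed
  ultimately show ?thesis by simp
qed

lemma s_linear: "i \<le> k \<Longrightarrow> s i = real i * s 1"
proof (induction i)
  case 0
  show ?case using s_zero by simp
next
  case (Suc i)
  thus ?case using increment_eq[of "Suc i"] by (simp add: algebra_simps)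
qed

lemma s_one_pos: "0 < s 1"
proof (rule ccontr)
  assume "\<not> 0 < s 1"
  moreover have "0 \<le> s 1" using s_mono[of 0 1] k_pos s_zero by simp
  ultimately have zero: "s i = 0" if "i \<le> k" for i using s_linear[OF that] by simp
  obtain X S A Ps where XS: "X \<subseteq> C" "S \<subseteq> C - X" "card X = k" "card S = 1"
      "finite X" "finite S" "card (X \<union> S) = Suc k"
    and A: "party_list_with C A Ps" "X \<in> Ps" "\<forall>y\<in>S. {y} \<in> Ps"
      "party_support A X = 2" "\<forall>y\<in>S. party_support A {y} = 1"
    and score: "\<And>W. thiele_score s A W =
      real 2 * s (card (X \<inter> W)) + real 1 * s 1 * real (card (S \<inter> W))"
    by (rule obtain_two_tier_profile[OF k_pos order.refl, of 2 1]) auto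
  obtain x where "x \<in> X" using XS(3) k_pos by fastforce
  obtain y where "S = {y}" using XS(4) card_1_singletonE by blast
  define W where "W = X \<union> S - {x}"
  have "W \<in> committees C k" unfolding W_def using XS \<open>x \<in> X\<close> by (intro committee_remove) auto
  moreover have "thiele_score s A W' = 0" if "W' \<in> committees C k" for W'
    using score[of W'] zero zero[OF k_pos] card_inter_committee_le[OF finite_C that] by simp
  ultimately have "W \<in> thiele_outcome C k s A" by (simp add: thiele_outcome_def)
  moreover have "{y} \<subseteq> W" using \<open>S = {y}\<close> XS(2) \<open>x \<in> X\<close> by (auto simp: W_def)
  ultimately have "X \<subseteq> W" using excellentD[OF A(1), of W "{y}" X] A \<open>S = {y}\<close> by auto
  thus False using \<open>x \<in> X\<close> by (auto simp: W_def)
qed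

end

theorem proposition1:
  fixes C :: "'a set" and k :: nat
  assumes "finite C" and "card C \<ge> 2" and "1 \<le> k" and "k < card C"
  shows "thiele_rule C k (AV C k) \<and> excellence C (AV C k) \<and>
    (\<forall>f. thiele_rule C k f \<and> excellence C f \<longrightarrow>
        (\<forall>A. is_profile C A \<longrightarrow> f A = AV C k A))"
proof (intro conjI allI impI)
  show "thiele_rule C k (AV C k)" using AV_thiele_rule[OF assms(1) less_imp_le[OF assms(4)]] .
  show "excellence C (AV C k)" using AV_excellence assms(1) .
next
  fix f A
  assume f: "thiele_rule C k f \<and> excellence C f" and "is_profile C A"
  then obtain s :: "nat \<Rightarrow> real"
    where s: "s 0 = 0" "\<forall>x y. x \<le> y \<longrightarrow> y \<le> k \<longrightarrow> s x \<le> s y"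
    and f_eq: "\<And>A. is_profile C A \<Longrightarrow> f A = thiele_outcome C k s A"
    unfolding thiele_rule_def by blast
  interpret excellent_thiele_scoring C k s
    using assms s excellence_cong[OF f_eq] f by unfold_locales auto
  have "thiele_outcome C k s A = AV C k A"
    using thiele_outcome_linear_eq_AV[OF finite_C s_one_pos] s_linear by (simp add: mult.commute)
  thus "f A = AV C k A" using f_eq \<open>is_profile C A\<close> by simp
qed

end
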